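(* Let $\zeta\in\mathbb{C}$ with $|\zeta|<1$, and let $\alpha_0=\zeta$ and $\alpha_j=0$ for $j\ge1$ (Bernstein–Szegő polynomials). Then for nonnegative integers $n,m,r,s$, \[ \mu_{n,m}=\begin{cases}\delta_{n,m}&\text{if } n\le m,\\ \zeta^{n-m}&\text{if } n>m,\end{cases}\qquad \mu_{n,r,s}=\begin{cases}\mu_{n,s}&\text{if } r=0,\\ \delta_{s,n+r}&\text{if } r>0.\end{cases} \]
   Context: For a polynomial $f(z)=\sum_{k=0}^n a_kz^k$ of degree $n$, write $\overline{f}(z)=\sum_k\overline{a_k}z^k$ and $f^*(z)=z^n\overline{f}(1/z)$. Given $(\alpha_n)$ with $|\alpha_n|<1$, define monic $\Phi_n$ by $\Phi_0=1$, $\Phi_{n+1}(z)=z\Phi_n(z)-\overline{\alpha_n}\Phi_n^*(z)$. Let $\mathcal{L}$ be the unique linear functional on Laurent polynomials with $\mathcal{L}(1)=1$ and $\mathcal{L}(\Phi_m(z)\overline{\Phi_n}(1/z))=0$ for $m\neq n$; set $\langle f,g\rangle=\mathcal{L}(f(z)\overline{g}(1/z))$, $\mu_{n,r,s}=\langle\Phi_s(z),z^n\Phi_r(z)\rangle/\langle\Phi_s,\Phi_s\rangle$ and $\mu_{n,m}=\mu_{n,0,m}$. *)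

theory Defs
  imports Complex_Main "HOL-Computational_Algebra.Polynomial"
begin

text \<open>f^*(z) = z^n conj-f(1/z), n = degree f: coefficient j is cnj (coeff f (n - j)).\<close>
definition pstar :: "complex poly \<Rightarrow> complex poly" where
  "pstar f = Poly (map (\<lambda>k. cnj (coeff f (degree f - k))) [0..<Suc (degree f)])"

fun OPUC :: "(nat \<Rightarrow> complex) \<Rightarrow> nat \<Rightarrow> complex poly" where
  "OPUC \<alpha> 0 = 1"
| "OPUC \<alpha> (Suc n) = [:0, 1:] * OPUC \<alpha> n - smult (cnj (\<alpha> n)) (pstar (OPUC \<alpha> n))"

text \<open>Laurent polynomials: finitely supported coefficient functions on the integers.\<close>
definition laurent :: "(int \<Rightarrow> complex) set" where
  "laurent = {p. finite {k. p k \<noteq> 0}}"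

definition laurent_linear :: "((int \<Rightarrow> complex) \<Rightarrow> complex) \<Rightarrow> bool" where
  "laurent_linear L \<longleftrightarrow>
     (\<forall>p\<in>laurent. \<forall>q\<in>laurent. L (\<lambda>k. p k + q k) = L p + L q) \<and>
     (\<forall>c. \<forall>p\<in>laurent. L (\<lambda>k. c * p k) = c * L p)"

definition laurent_one :: "int \<Rightarrow> complex" where
  "laurent_one = (\<lambda>k. if k = 0 then 1 else 0)"

text \<open>Coefficients of the Laurent polynomial f(z) * conj-g(1/z).\<close>
definition lprod :: "complex poly \<Rightarrow> complex poly \<Rightarrow> int \<Rightarrow> complex" where
  "lprod f g = (\<lambda>k. \<Sum>i\<le>degree f. \<Sum>j\<le>degree g.
      if int i - int j = k then coeff f i * cnj (coeff g j) else 0)"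

definition ip :: "((int \<Rightarrow> complex) \<Rightarrow> complex) \<Rightarrow> complex poly \<Rightarrow> complex poly \<Rightarrow> complex" where
  "ip L f g = L (lprod f g)"

definition mu :: "((int \<Rightarrow> complex) \<Rightarrow> complex) \<Rightarrow> (nat \<Rightarrow> complex) \<Rightarrow> nat \<Rightarrow> nat \<Rightarrow> nat \<Rightarrow> complex" where
  "mu L \<alpha> n r s = ip L (OPUC \<alpha> s) (monom 1 n * OPUC \<alpha> r) / ip L (OPUC \<alpha> s) (OPUC \<alpha> s)"

end

theory Submission
  imports Defs
begin

text \<open>For \<open>\<alpha> = (\<zeta>, 0, 0, \<dots>)\<close> the Szego recursion gives
  \<open>\<Phi>(k+1) = z^(k+1) - cnj \<zeta> z^k\<close>, so \<open>z^n \<Phi>(r) = \<Phi>(n+r)\<close> for \<open>r > 0\<close>, and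
  the second formula is just orthogonality. Orthogonality of \<open>\<Phi>(k)\<close> and \<open>\<Phi>(0) = 1\<close>,
  in both orders, determines all moments: \<open>L(z^k) = cnj \<zeta>^k\<close> and \<open>L(z^-k) = \<zeta>^k\<close>.
  Hence \<open>\<langle>\<Phi>(a+1), z^j\<rangle>\<close> vanishes for \<open>j \<le> a\<close> and equals \<open>\<zeta>^(j-a-1) (1 - |\<zeta>|^2)\<close>
  otherwise, while \<open>\<langle>\<Phi>(k), \<Phi>(k)\<rangle> = 1 - |\<zeta>|^2 \<noteq> 0\<close> for \<open>k > 0\<close>.\<close>

definition laurent_monom :: "int \<Rightarrow> int \<Rightarrow> complex" where
  "laurent_monom m = (\<lambda>k. if k = m then 1 else 0)"

lemma laurent_monom_in_laurent: "laurent_monom m \<in> laurent"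
  unfolding laurent_def laurent_monom_def by (auto intro: finite_subset[of _ "{m}"])

lemma mult_const_in_laurent: "p \<in> laurent \<Longrightarrow> (\<lambda>k. c * p k) \<in> laurent"
  unfolding laurent_def by (auto intro: finite_subset[of _ "{k. p k \<noteq> 0}"])

lemma sum_in_laurent:
  assumes "finite S" and "\<And>x. x \<in> S \<Longrightarrow> p x \<in> laurent"
  shows "(\<lambda>k. \<Sum>x\<in>S. p x k) \<in> laurent"
proof -
  have "{k. (\<Sum>x\<in>S. p x k) \<noteq> 0} \<subseteq> (\<Union>x\<in>S. {k. p x k \<noteq> 0})"
    by (auto elim: sum.not_neutral_contains_not_neutral)
  moreover have "finite (\<Union>x\<in>S. {k. p x k \<noteq> 0})"
    using assms unfolding laurent_def by blast
  ultimately show ?thesis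
    unfolding laurent_def by (auto intro: finite_subset)
qed

lemma laurent_linear_add:
  "laurent_linear L \<Longrightarrow> p \<in> laurent \<Longrightarrow> q \<in> laurent \<Longrightarrow> L (\<lambda>k. p k + q k) = L p + L q"
  unfolding laurent_linear_def by blast

lemma laurent_linear_mult_const:
  "laurent_linear L \<Longrightarrow> p \<in> laurent \<Longrightarrow> L (\<lambda>k. c * p k) = c * L p"
  unfolding laurent_linear_def by blast

lemma laurent_linear_zero:
  assumes "laurent_linear L"
  shows "L (\<lambda>k. 0) = 0"
  using laurent_linear_mult_const[OF assms, of "\<lambda>k. 0" 0] by (simp add: laurent_def)

lemma laurent_linear_sum:
  assumes lin: "laurent_linear L" and "finite S" and "\<And>x. x \<in> S \<Longrightarrow> p x \<in> laurent"
  shows "L (\<lambda>k. \<Sum>x\<in>S. p x k) = (\<Sum>x\<in>S. L (p x))"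
  using assms(2,3)
proof (induction S rule: finite_induct)
  case empty
  then show ?case using laurent_linear_zero[OF lin] by simp
next
  case (insert x F)
  have "L (\<lambda>k. \<Sum>y\<in>insert x F. p y k) = L (\<lambda>k. p x k + (\<Sum>y\<in>F. p y k))"
    using insert.hyps by simp
  also have "\<dots> = L (p x) + L (\<lambda>k. \<Sum>y\<in>F. p y k)"
    using insert by (intro laurent_linear_add[OF lin] sum_in_laurent) auto
  finally show ?case
    using insert by simp
qed

lemma lprod_eq_sum_laurent_monom:
  assumes "degree f \<le> A" and "degree g \<le> B"
  shows "lprod f g =
    (\<lambda>k. \<Sum>i\<le>A. \<Sum>j\<le>B. coeff f i * cnj (coeff g j) * laurent_monom (int i - int j) k)"
proof
  fix k
  have "lprod f g k =
      (\<Sum>i\<le>degree f. \<Sum>j\<le>degree g. coeff f i * cnj (coeff g j) * laurent_monom (int i - int j) k)"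
    unfolding lprod_def laurent_monom_def by (intro sum.cong refl) auto
  also have "\<dots> =
      (\<Sum>i\<le>A. \<Sum>j\<le>degree g. coeff f i * cnj (coeff g j) * laurent_monom (int i - int j) k)"
    by (rule sum.mono_neutral_left) (use assms in \<open>auto simp: coeff_eq_0\<close>)
  also have "\<dots> = (\<Sum>i\<le>A. \<Sum>j\<le>B. coeff f i * cnj (coeff g j) * laurent_monom (int i - int j) k)"
    by (intro sum.cong refl sum.mono_neutral_left) (use assms in \<open>auto simp: coeff_eq_0\<close>)
  finally show "lprod f g k = \<dots>" .
qed

lemma ip_eq_moment_sum:
  assumes lin: "laurent_linear L" and "degree f \<le> A" and "degree g \<le> B"
  shows "ip L f g = (\<Sum>i\<le>A. \<Sum>j\<le>B. coeff f i * cnj (coeff g j) * L (laurent_monom (int i - int j)))"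
proof -
  have row_in_laurent:
    "(\<lambda>k. \<Sum>j\<le>B. coeff f i * cnj (coeff g j) * laurent_monom (int i - int j) k) \<in> laurent" for i
    by (intro sum_in_laurent mult_const_in_laurent laurent_monom_in_laurent) simp
  have "ip L f g =
      L (\<lambda>k. \<Sum>i\<le>A. \<Sum>j\<le>B. coeff f i * cnj (coeff g j) * laurent_monom (int i - int j) k)"
    unfolding ip_def lprod_eq_sum_laurent_monom[OF assms(2,3)] ..
  also have "\<dots> = (\<Sum>i\<le>A. \<Sum>j\<le>B. coeff f i * cnj (coeff g j) * L (laurent_monom (int i - int j)))"
    using row_in_laurent
    by (simp add: laurent_linear_sum[OF lin] laurent_linear_mult_const[OF lin]
        mult_const_in_laurent laurent_monom_in_laurent)
  finally show ?thesis .
qed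

lemma ip_diff_left:
  assumes lin: "laurent_linear L"
  shows "ip L (f - g) h = ip L f h - ip L g h"
proof -
  let ?A = "max (degree f) (degree g)" and ?B = "degree h"
  have "ip L (f - g) h =
      (\<Sum>i\<le>?A. \<Sum>j\<le>?B. coeff (f - g) i * cnj (coeff h j) * L (laurent_monom (int i - int j)))"
    by (rule ip_eq_moment_sum[OF lin degree_diff_le_max order.refl])
  moreover have "ip L f h =
      (\<Sum>i\<le>?A. \<Sum>j\<le>?B. coeff f i * cnj (coeff h j) * L (laurent_monom (int i - int j)))"
    by (rule ip_eq_moment_sum[OF lin max.cobounded1 order.refl])
  moreover have "ip L g h =
      (\<Sum>i\<le>?A. \<Sum>j\<le>?B. coeff g i * cnj (coeff h j) * L (laurent_monom (int i - int j)))"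
    by (rule ip_eq_moment_sum[OF lin max.cobounded2 order.refl])
  ultimately show ?thesis
    by (simp add: ring_distribs sum_subtractf)
qed

lemma ip_diff_right:
  assumes lin: "laurent_linear L"
  shows "ip L h (f - g) = ip L h f - ip L h g"
proof -
  let ?A = "degree h" and ?B = "max (degree f) (degree g)"
  have "ip L h (f - g) =
      (\<Sum>i\<le>?A. \<Sum>j\<le>?B. coeff h i * cnj (coeff (f - g) j) * L (laurent_monom (int i - int j)))"
    by (rule ip_eq_moment_sum[OF lin order.refl degree_diff_le_max])
  moreover have "ip L h f =
      (\<Sum>i\<le>?A. \<Sum>j\<le>?B. coeff h i * cnj (coeff f j) * L (laurent_monom (int i - int j)))"
    by (rule ip_eq_moment_sum[OF lin order.refl max.cobounded1])
  moreover have "ip L h g =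
      (\<Sum>i\<le>?A. \<Sum>j\<le>?B. coeff h i * cnj (coeff g j) * L (laurent_monom (int i - int j)))"
    by (rule ip_eq_moment_sum[OF lin order.refl max.cobounded2])
  ultimately show ?thesis
    by (simp add: ring_distribs sum_subtractf)
qed

lemma ip_smult_left:
  assumes "laurent_linear L"
  shows "ip L (smult c f) h = c * ip L f h"
  unfolding ip_eq_moment_sum[OF assms degree_smult_le order.refl]
    ip_eq_moment_sum[OF assms order.refl order.refl]
  by (simp add: sum_distrib_left mult.assoc)

lemma ip_smult_right:
  assumes "laurent_linear L"
  shows "ip L h (smult c f) = cnj c * ip L h f"
  unfolding ip_eq_moment_sum[OF assms order.refl degree_smult_le]
    ip_eq_moment_sum[OF assms order.refl order.refl]
  by (simp add: sum_distrib_left algebra_simps)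

lemma ip_monom_monom:
  assumes "laurent_linear L"
  shows "ip L (monom 1 a) (monom 1 b) = L (laurent_monom (int a - int b))"
proof -
  have "ip L (monom 1 a) (monom 1 b) =
      (\<Sum>i\<le>a. \<Sum>j\<le>b. if j = b then if i = a then L (laurent_monom (int i - int j)) else 0 else 0)"
    unfolding ip_eq_moment_sum[OF assms degree_monom_le degree_monom_le]
    by (intro sum.cong refl) (simp add: coeff_monom)
  then show ?thesis
    by simp
qed

lemma OPUC_Bernstein_Szego_Suc:
  "OPUC (\<lambda>j. if j = 0 then \<zeta> else 0) (Suc k) = monom 1 (Suc k) - smult (cnj \<zeta>) (monom 1 k)"
proof (induction k)
  case 0
  then show ?case by (simp add: pstar_def monom_Suc)
next
  case (Suc k)
  then show ?case by (simp add: monom_Suc algebra_simps)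
qed

locale bernstein_szego =
  fixes \<zeta> :: complex and L :: "(int \<Rightarrow> complex) \<Rightarrow> complex"
  assumes norm_less_one: "norm \<zeta> < 1"
    and linear: "laurent_linear L"
    and normalized: "L laurent_one = 1"
    and orthogonal: "\<And>a b. a \<noteq> b \<Longrightarrow>
      L (lprod (OPUC (\<lambda>j. if j = 0 then \<zeta> else 0) a) (OPUC (\<lambda>j. if j = 0 then \<zeta> else 0) b)) = 0"
begin

abbreviation \<alpha> :: "nat \<Rightarrow> complex" where
  "\<alpha> \<equiv> \<lambda>j. if j = 0 then \<zeta> else 0"

abbreviation \<Phi> :: "nat \<Rightarrow> complex poly" where
  "\<Phi> \<equiv> OPUC \<alpha>"

lemmas Phi_Suc = OPUC_Bernstein_Szego_Suc[of \<zeta>]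

declare OPUC.simps(2)[simp del]

lemma ip_Phi_Phi_eq_0: "a \<noteq> b \<Longrightarrow> ip L (\<Phi> a) (\<Phi> b) = 0"
  unfolding ip_def by (rule orthogonal)

lemma monom_mult_Phi:
  assumes "0 < r"
  shows "monom 1 n * \<Phi> r = \<Phi> (n + r)"
proof -
  obtain r' where r: "r = Suc r'"
    using assms gr0_conv_Suc by blast
  show ?thesis
    unfolding r Phi_Suc add_Suc_right
    by (simp add: right_diff_distrib mult_monom)
qed

lemma ip_Phi_Suc_monom:
  "ip L (\<Phi> (Suc a)) (monom 1 j) =
     L (laurent_monom (int (Suc a) - int j)) - cnj \<zeta> * L (laurent_monom (int a - int j))"
  unfolding Phi_Suc
  by (simp add: ip_diff_left[OF linear] ip_smult_left[OF linear] ip_monom_monom[OF linear])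

lemma ip_monom_Phi_Suc:
  "ip L (monom 1 j) (\<Phi> (Suc a)) =
     L (laurent_monom (int j - int (Suc a))) - \<zeta> * L (laurent_monom (int j - int a))"
  unfolding Phi_Suc
  by (simp add: ip_diff_right[OF linear] ip_smult_right[OF linear] ip_monom_monom[OF linear])

lemma moment_0: "L (laurent_monom 0) = 1"
  using normalized by (simp add: laurent_monom_def laurent_one_def)

lemma moment_nonneg: "L (laurent_monom (int k)) = cnj \<zeta> ^ k"
proof (induction k)
  case 0
  then show ?case by (simp add: moment_0)
next
  case (Suc k)
  have "ip L (\<Phi> (Suc k)) (monom 1 0) = 0"
    using ip_Phi_Phi_eq_0[of "Suc k" 0] by simp
  then have "L (laurent_monom (int (Suc k))) = cnj \<zeta> * L (laurent_monom (int k))"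
    unfolding ip_Phi_Suc_monom by simp
  then show ?case
    using Suc.IH by simp
qed

lemma moment_neg: "L (laurent_monom (- int k)) = \<zeta> ^ k"
proof (induction k)
  case 0
  then show ?case by (simp add: moment_0)
next
  case (Suc k)
  have "ip L (monom 1 0) (\<Phi> (Suc k)) = 0"
    using ip_Phi_Phi_eq_0[of 0 "Suc k"] by simp
  then have "L (laurent_monom (- int (Suc k))) = \<zeta> * L (laurent_monom (- int k))"
    unfolding ip_monom_Phi_Suc by (simp add: algebra_simps)
  then show ?case
    using Suc.IH by simp
qed

lemma ip_Phi_0_monom: "ip L (\<Phi> 0) (monom 1 n) = \<zeta> ^ n"
  using ip_monom_monom[OF linear, of 0 n] by (simp add: moment_neg)

lemma ip_Phi_Suc_monom_le:
  assumes "j \<le> a"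
  shows "ip L (\<Phi> (Suc a)) (monom 1 j) = 0"
proof -
  have shift: "int (Suc a) - int j = int (Suc (a - j))" "int a - int j = int (a - j)"
    using assms by auto
  show ?thesis
    unfolding ip_Phi_Suc_monom shift moment_nonneg by simp
qed

lemma ip_Phi_Suc_monom_gt:
  assumes "a < j"
  shows "ip L (\<Phi> (Suc a)) (monom 1 j) = \<zeta> ^ (j - Suc a) * (1 - cnj \<zeta> * \<zeta>)"
proof -
  have shift: "int (Suc a) - int j = - int (j - Suc a)"
    "int a - int j = - int (Suc (j - Suc a))"
    using assms by auto
  show ?thesis
    unfolding ip_Phi_Suc_monom shift moment_neg by (simp add: algebra_simps)
qed

lemma ip_Phi_self: "ip L (\<Phi> k) (\<Phi> k) = (if k = 0 then 1 else 1 - cnj \<zeta> * \<zeta>)"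
proof (cases k)
  case 0
  then show ?thesis
    using ip_Phi_0_monom[of 0] by simp
next
  case (Suc a)
  have "ip L (\<Phi> (Suc a)) (\<Phi> (Suc a)) =
      ip L (\<Phi> (Suc a)) (monom 1 (Suc a)) - \<zeta> * ip L (\<Phi> (Suc a)) (monom 1 a)"
    by (subst (2) Phi_Suc) (simp add: ip_diff_right[OF linear] ip_smult_right[OF linear])
  also have "\<dots> = 1 - cnj \<zeta> * \<zeta>"
    by (simp add: ip_Phi_Suc_monom_gt ip_Phi_Suc_monom_le)
  finally show ?thesis
    using Suc by simp
qed

lemma one_minus_norm_square_neq_0: "1 - cnj \<zeta> * \<zeta> \<noteq> 0"
proof
  assume "1 - cnj \<zeta> * \<zeta> = 0"
  then have "norm (cnj \<zeta> * \<zeta>) = 1"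
    by simp
  then have "norm \<zeta> * norm \<zeta> = 1"
    by (simp only: norm_mult complex_mod_cnj)
  moreover have "norm \<zeta> * norm \<zeta> < 1"
    using norm_less_one mult_left_le_one_le[of "norm \<zeta>" "norm \<zeta>"] by simp
  ultimately show False
    by simp
qed

lemma ip_Phi_self_neq_0: "ip L (\<Phi> k) (\<Phi> k) \<noteq> 0"
  using one_minus_norm_square_neq_0 by (simp add: ip_Phi_self)

lemma mu_middle_0: "mu L \<alpha> n 0 m = (if n \<le> m then (if n = m then 1 else 0) else \<zeta> ^ (n - m))"
proof (cases m)
  case 0
  then show ?thesis
    using ip_Phi_0_monom[of n] ip_Phi_self[of 0] by (simp add: mu_def)
next
  case (Suc a)
  then have "mu L \<alpha> n 0 m = ip L (\<Phi> (Suc a)) (monom 1 n) / (1 - cnj \<zeta> * \<zeta>)"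
    by (simp add: mu_def ip_Phi_self)
  then show ?thesis
    using Suc one_minus_norm_square_neq_0
    by (simp add: ip_Phi_Suc_monom_le ip_Phi_Suc_monom_gt not_le)
qed

lemma mu_middle_pos: "0 < r \<Longrightarrow> mu L \<alpha> n r s = (if s = n + r then 1 else 0)"
  by (simp add: mu_def monom_mult_Phi ip_Phi_Phi_eq_0 ip_Phi_self_neq_0)

end

theorem proposition4p4:
  fixes \<zeta> :: complex and L :: "(int \<Rightarrow> complex) \<Rightarrow> complex" and n m r s :: nat
  defines "\<alpha> \<equiv> (\<lambda>j::nat. if j = 0 then \<zeta> else 0)"
  assumes "norm \<zeta> < 1"
    and "laurent_linear L"
    and "L laurent_one = 1"
    and "\<And>a b. a \<noteq> b \<Longrightarrow> L (lprod (OPUC \<alpha> a) (OPUC \<alpha> b)) = 0"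
  shows "mu L \<alpha> n 0 m = (if n \<le> m then (if n = m then 1 else 0) else \<zeta> ^ (n - m)) \<and>
         mu L \<alpha> n r s = (if r = 0 then mu L \<alpha> n 0 s else (if s = n + r then 1 else 0))"
proof -
  interpret bernstein_szego \<zeta> L
    using assms unfolding \<alpha>_def by unfold_locales
  show ?thesis
    unfolding \<alpha>_def using mu_middle_0 mu_middle_pos by simp
qed

end
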